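(* In the setting described in the context, suppose that for all $t=1,\dots,n$ and $j=1,\dots,m+1$ $$\mathsf E[\mathbf 1_{t,j}]=\frac{\mathsf E\big[G\,\mathbf 1_{\{G\in[\alpha_{j-1},\alpha_j)\}}\big]}{g(\alpha_j)-g(\alpha_{j-1})}\qquad(\ast)$$ and that the random vectors $(\mathbf 1_{t,j})_{j=1,\dots,m+1}$, $t=1,\dots,n$, are independent. Let $X_t=\sum_{j=1}^{m+1}\mathbf 1_{t,j}$ (the number of breached levels). Then for every $t$, $$\mathsf P(X_t\le k)=1-\frac{\mathsf E\big[G\,\mathbf 1_{\{G\in[\alpha_{m-k},\alpha_{m-k+1})\}}\big]}{g(\alpha_{m-k+1})-g(\alpha_{m-k})},\quad 0\le k\le m,\qquad \mathsf P(X_t\le m+1)=1,$$ and the random variables $X_1,\dots,X_n$ are independent.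
   Context: Let $n\ge1$ and let $L=(L_t)_{t=1}^n$ and $M=(M_t)_{t=1}^n$ be real-valued stochastic processes on a probability space $(\Omega,\mathcal F,\mathsf P)$. Assume that for each $t$ the conditional distribution function $F_{M_t\mid M_{t-1},\dots,M_1}(x\mid y_{t-1},\dots,y_1)$ is continuous in $x$. Define $q^{t-1}_{M_t}(u)=\inf\{x: F_{M_t\mid M_{t-1},\dots,M_1}(x\mid L_{t-1},\dots,L_1)\ge u\}$. A distortion function is a non-decreasing $g:[0,1]\to[0,1]$ with $g(0)=0$, $g(1)=1$. Let $g$ be a left-continuous distortion function and let $G$ be a $[0,1]$-valued random variable, independent of $L$ and $M$, with $\mathsf P(G<u)=g(u)$ for all $u\in[0,1]$. Let $0=\alpha_0<\alpha_1<\dots<\alpha_m<\alpha_{m+1}=1$ with $g(\alpha_j)-g(\alpha_{j-1})\neq0$ for all $j$. Let $(G_{t,j})_{t\le n,\,j\le m+1}$ be independent random variables, independent of $(L,M)$, with $G_{t,j}$ distributed as $G$ conditional on $G\in[\alpha_{j-1},\alpha_j)$. Set $\mathbf 1_{t,j}=1$ if $L_t>q^{t-1}_{M_t}(1-G_{t,j})$ and $\mathbf 1_{t,j}=0$ otherwise. *)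

theory Defs
  imports "HOL-Probability.Probability"
begin

text \<open>Generalised inverse (quantile) of a distribution function, with values in the
extended reals so that the infimum of the empty set is \<open>+\<infinity>\<close>:
  quant F u = inf { x. F x \<ge> u }.\<close>
definition quant :: "(real \<Rightarrow> real) \<Rightarrow> real \<Rightarrow> ereal" where
  "quant F u = Inf (ereal ` {x. u \<le> F x})"

text \<open>Conditional distribution function of M_t given the past, evaluated along the path
of L: F t y x stands for F_{M_t | M_{t-1},...,M_1}(x | y_{t-1},...,y_1).\<close>
definition breach ::
  "(nat \<Rightarrow> (nat \<Rightarrow> real) \<Rightarrow> real \<Rightarrow> real) \<Rightarrow> (nat \<Rightarrow> 'a \<Rightarrow> real) \<Rightarrow>
   (nat \<Rightarrow> nat \<Rightarrow> 'a \<Rightarrow> real) \<Rightarrow> nat \<Rightarrow> nat \<Rightarrow> 'a \<Rightarrow> real" where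
  "breach F L Gtj t j \<omega> =
     (if quant (F t (\<lambda>i. L i \<omega>)) (1 - Gtj t j \<omega>) < ereal (L t \<omega>) then 1 else 0)"

definition nbreach ::
  "(nat \<Rightarrow> (nat \<Rightarrow> real) \<Rightarrow> real \<Rightarrow> real) \<Rightarrow> (nat \<Rightarrow> 'a \<Rightarrow> real) \<Rightarrow>
   (nat \<Rightarrow> nat \<Rightarrow> 'a \<Rightarrow> real) \<Rightarrow> nat \<Rightarrow> nat \<Rightarrow> 'a \<Rightarrow> real" where
  "nbreach F L Gtj m t \<omega> = (\<Sum>j=1..m+1. breach F L Gtj t j \<omega>)"

text \<open>Independence of two random elements with possibly different codomains (the
library constant indep_var requires equal codomain types); this is exactly the right-hand
side of the library characterisation prob_space.indep_var_eq.\<close>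
definition indep_rv :: "'a measure \<Rightarrow> 'b measure \<Rightarrow> ('a \<Rightarrow> 'b) \<Rightarrow> 'c measure \<Rightarrow> ('a \<Rightarrow> 'c) \<Rightarrow> bool" where
  "indep_rv P S X T Y \<longleftrightarrow>
     X \<in> measurable P S \<and> Y \<in> measurable P T \<and>
     prob_space.indep_set P
       (sigma_sets (space P) { X -` A \<inter> space P | A. A \<in> sets S})
       (sigma_sets (space P) { Y -` A \<inter> space P | A. A \<in> sets T})"

end

theory Submission
  imports Defs
begin

text \<open>Since \<open>G\<^sub>t\<^sub>,\<^sub>j\<close> has the law of \<open>G\<close> conditioned on \<open>[\<alpha>\<^sub>j\<^sub>-\<^sub>1, \<alpha>\<^sub>j)\<close>, it lies in that
interval almost surely, so \<open>G\<^sub>t\<^sub>,\<^sub>1 \<le> \<dots> \<le> G\<^sub>t\<^sub>,\<^sub>m\<^sub>+\<^sub>1\<close>. The quantile is monotone, hence the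
indicators \<open>1\<^sub>t\<^sub>,\<^sub>1 \<le> \<dots> \<le> 1\<^sub>t\<^sub>,\<^sub>m\<^sub>+\<^sub>1\<close> increase in \<open>j\<close>, and \<open>X\<^sub>t \<le> k\<close> holds exactly when
\<open>1\<^sub>t\<^sub>,\<^sub>m\<^sub>-\<^sub>k\<^sub>+\<^sub>1 = 0\<close>; hypothesis \<open>(\<ast>)\<close> gives the probability of that event. Independence of
the \<open>X\<^sub>t\<close> is inherited from the independence of the rows \<open>(1\<^sub>t\<^sub>,\<^sub>j)\<^sub>j\<close>, of which they are
measurable functions.\<close>

lemma quant_mono: "u \<le> v \<Longrightarrow> quant F u \<le> quant F v"
  unfolding quant_def by (intro Inf_superset_mono) auto

lemma breach_01: "breach F L Gtj t j \<omega> \<in> {0, 1}"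
  by (simp add: breach_def)

lemma breach_mono:
  assumes "Gtj t i \<omega> \<le> Gtj t j \<omega>"
  shows "breach F L Gtj t i \<omega> \<le> breach F L Gtj t j \<omega>"
proof -
  have "quant (F t (\<lambda>s. L s \<omega>)) (1 - Gtj t j \<omega>) \<le> quant (F t (\<lambda>s. L s \<omega>)) (1 - Gtj t i \<omega>)"
    using assms by (intro quant_mono) simp
  then show ?thesis
    unfolding breach_def using le_less_trans by (auto split: if_splits)
qed

lemma nbreach_le: "nbreach F L Gtj m t \<omega> \<le> real (m + 1)"
proof -
  have "breach F L Gtj t j \<omega> \<le> 1" for j
    using breach_01[of F L Gtj t j \<omega>] by auto
  then have "nbreach F L Gtj m t \<omega> \<le> real (card {1..m+1}) * 1"
    unfolding nbreach_def by (intro sum_bounded_above)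
  then show ?thesis by simp
qed

lemma mono_of_mem_consecutive_intervals:
  fixes x \<alpha> :: "nat \<Rightarrow> real"
  assumes mem: "\<And>j. j \<in> {1..N} \<Longrightarrow> x j \<in> {\<alpha> (j - 1)..<\<alpha> j}"
    and \<alpha>_mono: "\<And>i j. i \<le> j \<Longrightarrow> j \<le> N \<Longrightarrow> \<alpha> i \<le> \<alpha> j"
    and "i \<in> {1..N}" "j \<in> {1..N}" "i \<le> j"
  shows "x i \<le> x j"
proof (cases "i = j")
  case False
  then have "x i < \<alpha> i" using mem \<open>i \<in> {1..N}\<close> by auto
  also have "\<alpha> i \<le> \<alpha> (j - 1)" using \<alpha>_mono False assms(3-5) by simp
  also have "\<alpha> (j - 1) \<le> x j" using mem \<open>j \<in> {1..N}\<close> by auto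
  finally show ?thesis by simp
qed simp

lemma sum_mono_01_le_iff:
  fixes f :: "nat \<Rightarrow> real"
  assumes f01: "\<And>j. f j \<in> {0, 1}"
    and f_mono: "\<And>i j. 1 \<le> i \<Longrightarrow> i \<le> j \<Longrightarrow> j \<le> N \<Longrightarrow> f i \<le> f j"
    and "k < N"
  shows "(\<Sum>j=1..N. f j) \<le> real k \<longleftrightarrow> f (N - k) = 0"
proof (cases "f (N - k) = 0")
  case True
  have "f j = 0" if "j \<in> {1..N - k}" for j
  proof -
    have "f j \<le> f (N - k)" using that \<open>k < N\<close> by (intro f_mono) auto
    then show ?thesis using True f01[of j] by auto
  qed
  then have "(\<Sum>j=1..N. f j) = (\<Sum>j=Suc (N - k)..N. f j)"
    by (intro sum.mono_neutral_right) auto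
  also have "\<dots> \<le> real (card {Suc (N - k)..N}) * 1"
  proof (rule sum_bounded_above)
    show "f j \<le> 1" for j using f01[of j] by auto
  qed
  finally show ?thesis using True \<open>k < N\<close> by simp
next
  case False
  have "f j = 1" if "j \<in> {N - k..N}" for j
  proof -
    have "f (N - k) \<le> f j" using that \<open>k < N\<close> by (intro f_mono) auto
    then show ?thesis using False f01[of j] f01[of "N - k"] by auto
  qed
  then have "real (card {N - k..N}) = (\<Sum>j=N - k..N. f j)"
    by simp
  also have "\<dots> \<le> (\<Sum>j=1..N. f j)"
  proof (rule sum_mono2)
    show "0 \<le> f j" for j using f01[of j] by auto
  qed (use \<open>k < N\<close> in auto)
  finally show ?thesis using False \<open>k < N\<close> by simp
qed

context prob_space
begin

lemma prob_atLeastLessThan_eq_diff: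
  fixes X :: "'a \<Rightarrow> real"
  assumes X: "X \<in> borel_measurable M" and "a \<le> b"
  shows "prob (X -` {a..<b} \<inter> space M)
    = prob {\<omega> \<in> space M. X \<omega> < b} - prob {\<omega> \<in> space M. X \<omega> < a}"
proof -
  have "X -` {a..<b} \<inter> space M = {\<omega> \<in> space M. X \<omega> < b} - {\<omega> \<in> space M. X \<omega> < a}"
    using \<open>a \<le> b\<close> by auto
  also have "prob \<dots> = prob {\<omega> \<in> space M. X \<omega> < b} - prob {\<omega> \<in> space M. X \<omega> < a}"
    using X \<open>a \<le> b\<close> by (intro finite_measure_Diff) auto
  finally show ?thesis .
qed

lemma AE_mem_of_conditional_law:
  assumes law: "\<And>A. A \<in> sets borel \<Longrightarrow>
      prob (Y -` A \<inter> space M) = prob (X -` (A \<inter> I) \<inter> space M) / prob (X -` I \<inter> space M)"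
    and I: "I \<in> sets borel" and pos: "prob (X -` I \<inter> space M) \<noteq> 0"
  shows "AE \<omega> in M. Y \<omega> \<in> I"
proof -
  have "prob (Y -` I \<inter> space M) = 1"
    using law[OF I] pos by simp
  from AE_prob_1[OF this] show ?thesis by eventually_elim auto
qed

lemma AE_conditional_levels_mono:
  fixes X :: "'a \<Rightarrow> real" and Y :: "nat \<Rightarrow> 'a \<Rightarrow> real"
  assumes \<alpha>_mono: "\<And>i j. i \<le> j \<Longrightarrow> j \<le> N \<Longrightarrow> \<alpha> i \<le> \<alpha> j"
    and pos: "\<And>j. j \<in> {1..N} \<Longrightarrow> prob (X -` {\<alpha> (j - 1)..<\<alpha> j} \<inter> space M) \<noteq> 0"
    and law: "\<And>j A. j \<in> {1..N} \<Longrightarrow> A \<in> sets borel \<Longrightarrow> prob (Y j -` A \<inter> space M)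
      = prob (X -` (A \<inter> {\<alpha> (j - 1)..<\<alpha> j}) \<inter> space M) / prob (X -` {\<alpha> (j - 1)..<\<alpha> j} \<inter> space M)"
  shows "AE \<omega> in M. \<forall>i\<in>{1..N}. \<forall>j\<in>{1..N}. i \<le> j \<longrightarrow> Y i \<omega> \<le> Y j \<omega>"
proof -
  have "AE \<omega> in M. Y j \<omega> \<in> {\<alpha> (j - 1)..<\<alpha> j}" if "j \<in> {1..N}" for j
    using law[OF that] pos[OF that] by (intro AE_mem_of_conditional_law[where X=X]) auto
  then have "AE \<omega> in M. \<forall>j\<in>{1..N}. Y j \<omega> \<in> {\<alpha> (j - 1)..<\<alpha> j}"
    by (intro AE_finite_allI) auto
  then show ?thesis
  proof eventually_elim
    case (elim \<omega>)
    show ?case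
      by (intro ballI impI mono_of_mem_consecutive_intervals[where x="\<lambda>j. Y j \<omega>" and N=N])
        (use elim \<alpha>_mono in auto)
  qed
qed

lemma prob_eq_0_of_01_valued:
  assumes X: "X \<in> borel_measurable M" and X01: "\<And>\<omega>. X \<omega> \<in> {0, 1}"
  shows "prob {\<omega> \<in> space M. X \<omega> = 0} = 1 - expectation X"
proof -
  have "expectation X = expectation (indicator {\<omega> \<in> space M. X \<omega> = 1})"
    using X01 by (intro Bochner_Integration.integral_cong) (auto simp: indicator_def)
  also have "\<dots> = prob {\<omega> \<in> space M. X \<omega> = 1}"
    by (simp add: Int_absorb2)
  also have "\<dots> = 1 - prob (space M - {\<omega> \<in> space M. X \<omega> = 1})"
    using X by (subst prob_compl) auto
  also have "space M - {\<omega> \<in> space M. X \<omega> = 1} = {\<omega> \<in> space M. X \<omega> = 0}"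
    using X01 by auto
  finally show ?thesis by simp
qed

lemma indep_vars_restrict_component_measurable:
  assumes "indep_vars (\<lambda>_. PiM J (\<lambda>_. N)) (\<lambda>t \<omega>. restrict (\<lambda>j. X t j \<omega>) J) T"
    and "t \<in> T" "j \<in> J"
  shows "X t j \<in> measurable M N"
proof -
  have "(\<lambda>\<omega>. restrict (\<lambda>j. X t j \<omega>) J) \<in> measurable M (PiM J (\<lambda>_. N))"
    using assms unfolding indep_vars_def by auto
  from measurable_comp[OF this measurable_component_singleton[OF \<open>j \<in> J\<close>]]
  show ?thesis using \<open>j \<in> J\<close> by (simp add: comp_def)
qed

lemma indep_vars_sum_rows:
  fixes X :: "'i \<Rightarrow> 'j \<Rightarrow> 'a \<Rightarrow> real"
  assumes "indep_vars (\<lambda>_. PiM J (\<lambda>_. borel)) (\<lambda>t \<omega>. restrict (\<lambda>j. X t j \<omega>) J) T"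
  shows "indep_vars (\<lambda>_. borel) (\<lambda>t \<omega>. \<Sum>j\<in>J. X t j \<omega>) T"
proof -
  have "indep_vars (\<lambda>_. borel) (\<lambda>t \<omega>. \<Sum>j\<in>J. restrict (\<lambda>j. X t j \<omega>) J j) T"
    using assms by (rule indep_vars_compose2) measurable
  then show ?thesis by simp
qed

lemma prob_nbreach_le:
  assumes meas: "\<And>j. j \<in> {1..m+1} \<Longrightarrow> breach F L Gtj t j \<in> borel_measurable M"
    and nested: "AE \<omega> in M. \<forall>i\<in>{1..m+1}. \<forall>j\<in>{1..m+1}. i \<le> j \<longrightarrow> Gtj t i \<omega> \<le> Gtj t j \<omega>"
    and "k \<le> m"
  shows "prob {\<omega> \<in> space M. nbreach F L Gtj m t \<omega> \<le> real k}
    = 1 - expectation (breach F L Gtj t (m - k + 1))"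
proof -
  have "AE \<omega> in M. nbreach F L Gtj m t \<omega> \<le> real k \<longleftrightarrow> breach F L Gtj t (m - k + 1) \<omega> = 0"
    using nested
  proof eventually_elim
    case (elim \<omega>)
    have "(\<Sum>j=1..m+1. breach F L Gtj t j \<omega>) \<le> real k \<longleftrightarrow> breach F L Gtj t (m + 1 - k) \<omega> = 0"
      using elim \<open>k \<le> m\<close> by (intro sum_mono_01_le_iff breach_01 breach_mono) auto
    then show ?case
      using \<open>k \<le> m\<close> by (simp add: nbreach_def Suc_diff_le)
  qed
  moreover have "nbreach F L Gtj m t \<in> borel_measurable M"
    unfolding nbreach_def[abs_def] using meas by (intro borel_measurable_sum) auto
  ultimately have "prob {\<omega> \<in> space M. nbreach F L Gtj m t \<omega> \<le> real k}
      = prob {\<omega> \<in> space M. breach F L Gtj t (m - k + 1) \<omega> = 0}"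
    using meas[of "m - k + 1"] by (intro measure_eq_AE) auto
  also have "\<dots> = 1 - expectation (breach F L Gtj t (m - k + 1))"
    using meas[of "m - k + 1"] by (intro prob_eq_0_of_01_valued breach_01) auto
  finally show ?thesis .
qed

end

theorem lemma3p2:
  fixes P :: "'a measure"
    and n m :: nat
    and L M :: "nat \<Rightarrow> 'a \<Rightarrow> real"
    and F :: "nat \<Rightarrow> (nat \<Rightarrow> real) \<Rightarrow> real \<Rightarrow> real"
    and g :: "real \<Rightarrow> real"
    and G :: "'a \<Rightarrow> real"
    and Gtj :: "nat \<Rightarrow> nat \<Rightarrow> 'a \<Rightarrow> real"
    and \<alpha> :: "nat \<Rightarrow> real"
  assumes P: "prob_space P"
    and n: "n \<ge> 1"
    and L_rv: "\<And>t. t \<in> {1..n} \<Longrightarrow> L t \<in> borel_measurable P"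
    and M_rv: "\<And>t. t \<in> {1..n} \<Longrightarrow> M t \<in> borel_measurable P"
    \<comment> \<open>F t is a (regular version of the) conditional distribution function of M_t given
        M_{t-1},...,M_1: it depends only on y_1..y_{t-1}, is a continuous distribution
        function in x, and satisfies the defining property of conditional distributions\<close>
    and F_past: "\<And>t y y' x. t \<in> {1..n} \<Longrightarrow> (\<forall>i\<in>{1..<t}. y i = y' i) \<Longrightarrow> F t y x = F t y' x"
    and F_mono: "\<And>t y. t \<in> {1..n} \<Longrightarrow> mono (F t y)"
    and F_cont: "\<And>t y. t \<in> {1..n} \<Longrightarrow> continuous_on UNIV (F t y)"
    and F_bot: "\<And>t y. t \<in> {1..n} \<Longrightarrow> (F t y \<longlongrightarrow> 0) at_bot"
    and F_top: "\<And>t y. t \<in> {1..n} \<Longrightarrow> (F t y \<longlongrightarrow> 1) at_top"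
    and F_meas: "\<And>t x. t \<in> {1..n} \<Longrightarrow> (\<lambda>\<omega>. F t (\<lambda>i. M i \<omega>) x) \<in> borel_measurable P"
    and F_cond: "\<And>t x B. t \<in> {1..n} \<Longrightarrow> B \<in> sets (PiM {1..<t} (\<lambda>_. borel)) \<Longrightarrow>
        measure P {\<omega> \<in> space P. M t \<omega> \<le> x \<and> restrict (\<lambda>i. M i \<omega>) {1..<t} \<in> B}
        = integral\<^sup>L P (\<lambda>\<omega>. indicator B (restrict (\<lambda>i. M i \<omega>) {1..<t}) * F t (\<lambda>i. M i \<omega>) x)"
    \<comment> \<open>left-continuous distortion function g\<close>
    and g_mono: "mono_on {0..1} g"
    and g_range: "g ` {0..1} \<subseteq> {0..1}"
    and g0: "g 0 = 0" and g1: "g 1 = 1"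
    and g_lcont: "\<And>u. u \<in> {0<..1} \<Longrightarrow> (g \<longlongrightarrow> g u) (at_left u)"
    \<comment> \<open>G with P(G < u) = g(u), independent of (L, M)\<close>
    and G_rv: "G \<in> borel_measurable P"
    and G_range: "\<And>\<omega>. \<omega> \<in> space P \<Longrightarrow> G \<omega> \<in> {0..1}"
    and G_dist: "\<And>u. u \<in> {0..1} \<Longrightarrow> measure P {\<omega> \<in> space P. G \<omega> < u} = g u"
    and G_indep: "indep_rv P borel G
        (PiM {1..n} (\<lambda>_. borel \<Otimes>\<^sub>M borel)) (\<lambda>\<omega>. restrict (\<lambda>t. (L t \<omega>, M t \<omega>)) {1..n})"
    \<comment> \<open>levels 0 = alpha_0 < ... < alpha_{m+1} = 1\<close>
    and \<alpha>0: "\<alpha> 0 = 0" and \<alpha>1: "\<alpha> (m + 1) = 1"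
    and \<alpha>_strict: "\<And>j. j \<le> m \<Longrightarrow> \<alpha> j < \<alpha> (Suc j)"
    and g_\<alpha>: "\<And>j. j \<in> {1..m+1} \<Longrightarrow> g (\<alpha> j) - g (\<alpha> (j - 1)) \<noteq> 0"
    \<comment> \<open>the G_{t,j}: G_{t,j} ~ G conditional on G \<in> [alpha_{j-1}, alpha_j),
        mutually independent and independent of (L, M)\<close>
    and Gtj_rv: "\<And>t j. t \<in> {1..n} \<Longrightarrow> j \<in> {1..m+1} \<Longrightarrow> Gtj t j \<in> borel_measurable P"
    and Gtj_dist: "\<And>t j A. t \<in> {1..n} \<Longrightarrow> j \<in> {1..m+1} \<Longrightarrow> A \<in> sets borel \<Longrightarrow>
        measure P (Gtj t j -` A \<inter> space P)
        = measure P (G -` (A \<inter> {\<alpha> (j - 1)..<\<alpha> j}) \<inter> space P) / (g (\<alpha> j) - g (\<alpha> (j - 1)))"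
    and Gtj_indep: "prob_space.indep_vars P (\<lambda>_. borel) (\<lambda>(t, j). Gtj t j) ({1..n} \<times> {1..m+1})"
    and Gtj_indep_LM: "indep_rv P
        (PiM ({1..n} \<times> {1..m+1}) (\<lambda>_. borel)) (\<lambda>\<omega>. restrict (\<lambda>(t, j). Gtj t j \<omega>) ({1..n} \<times> {1..m+1}))
        (PiM {1..n} (\<lambda>_. borel \<Otimes>\<^sub>M borel)) (\<lambda>\<omega>. restrict (\<lambda>t. (L t \<omega>, M t \<omega>)) {1..n})"
    \<comment> \<open>hypothesis (*)\<close>
    and star: "\<And>t j. t \<in> {1..n} \<Longrightarrow> j \<in> {1..m+1} \<Longrightarrow>
        integral\<^sup>L P (breach F L Gtj t j)
        = integral\<^sup>L P (\<lambda>\<omega>. G \<omega> * indicator {\<alpha> (j - 1)..<\<alpha> j} (G \<omega>)) / (g (\<alpha> j) - g (\<alpha> (j - 1)))"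
    \<comment> \<open>the vectors (1_{t,j})_j, t = 1..n, are independent\<close>
    and rows_indep: "prob_space.indep_vars P (\<lambda>_. PiM {1..m+1} (\<lambda>_. borel))
        (\<lambda>t \<omega>. restrict (\<lambda>j. breach F L Gtj t j \<omega>) {1..m+1}) {1..n}"
  shows "(\<forall>t \<in> {1..n}.
            (\<forall>k \<le> m. measure P {\<omega> \<in> space P. nbreach F L Gtj m t \<omega> \<le> real k}
               = 1 - integral\<^sup>L P (\<lambda>\<omega>. G \<omega> * indicator {\<alpha> (m - k)..<\<alpha> (m - k + 1)} (G \<omega>))
                     / (g (\<alpha> (m - k + 1)) - g (\<alpha> (m - k))))
          \<and> measure P {\<omega> \<in> space P. nbreach F L Gtj m t \<omega> \<le> real (m + 1)} = 1)
       \<and> prob_space.indep_vars P (\<lambda>_. borel) (nbreach F L Gtj m) {1..n}"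
proof -
  interpret prob_space P by (rule P)
  have \<alpha>_mono: "\<alpha> i \<le> \<alpha> j" if "i \<le> j" "j \<le> m + 1" for i j
  proof (rule lift_Suc_mono_le_ivl[where N="{..m}"])
    show "\<alpha> i \<le> \<alpha> (Suc i)" if "i \<in> {..m}" for i
      using \<alpha>_strict that by (simp add: less_imp_le)
  qed (use that in auto)
  have \<alpha>_range: "\<alpha> j \<in> {0..1}" if "j \<le> m + 1" for j
    using \<alpha>_mono[of 0 j] \<alpha>_mono[of j "m + 1"] that \<alpha>0 \<alpha>1 by simp
  have level_prob: "prob (G -` {\<alpha> (j - 1)..<\<alpha> j} \<inter> space P) = g (\<alpha> j) - g (\<alpha> (j - 1))"
    if "j \<in> {1..m+1}" for j
    using that G_dist[OF \<alpha>_range, of j] G_dist[OF \<alpha>_range, of "j - 1"] \<alpha>_mono[of "j - 1" j]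
    by (auto simp: prob_atLeastLessThan_eq_diff[OF G_rv])
  have nested: "AE \<omega> in P. \<forall>i\<in>{1..m+1}. \<forall>j\<in>{1..m+1}. i \<le> j \<longrightarrow> Gtj t i \<omega> \<le> Gtj t j \<omega>"
    if t: "t \<in> {1..n}" for t
  proof (rule AE_conditional_levels_mono[where X=G])
    show "prob (G -` {\<alpha> (j - 1)..<\<alpha> j} \<inter> space P) \<noteq> 0" if "j \<in> {1..m+1}" for j
      using level_prob[OF that] g_\<alpha>[OF that] by simp
    show "prob (Gtj t j -` A \<inter> space P) = prob (G -` (A \<inter> {\<alpha> (j - 1)..<\<alpha> j}) \<inter> space P)
        / prob (G -` {\<alpha> (j - 1)..<\<alpha> j} \<inter> space P)" if "j \<in> {1..m+1}" "A \<in> sets borel" for j A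
      unfolding level_prob[OF that(1)] by (rule Gtj_dist[OF t that])
  qed (rule \<alpha>_mono)
  have breach_meas: "breach F L Gtj t j \<in> borel_measurable P" if "t \<in> {1..n}" "j \<in> {1..m+1}" for t j
    using rows_indep that by (rule indep_vars_restrict_component_measurable)
  have "prob {\<omega> \<in> space P. nbreach F L Gtj m t \<omega> \<le> real k}
      = 1 - integral\<^sup>L P (\<lambda>\<omega>. G \<omega> * indicator {\<alpha> (m - k)..<\<alpha> (m - k + 1)} (G \<omega>))
        / (g (\<alpha> (m - k + 1)) - g (\<alpha> (m - k)))" if t: "t \<in> {1..n}" and "k \<le> m" for t k
  proof -
    have j: "m - k + 1 \<in> {1..m+1}" "m - k + 1 - 1 = m - k" using \<open>k \<le> m\<close> by auto
    show ?thesis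
      using prob_nbreach_le[OF breach_meas[OF t] nested[OF t] \<open>k \<le> m\<close>] star[OF t j(1), unfolded j(2)]
      by simp
  qed
  moreover have "prob {\<omega> \<in> space P. nbreach F L Gtj m t \<omega> \<le> real (m + 1)} = 1" for t
    using nbreach_le[of F L Gtj m t] prob_space by simp
  moreover have "indep_vars (\<lambda>_. borel) (nbreach F L Gtj m) {1..n}"
    using indep_vars_sum_rows[OF rows_indep] by (simp add: nbreach_def[abs_def])
  ultimately show ?thesis by blast
qed

end
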